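(* Let $X$ be a metric space, $\mathcal M=\{M_1,\dots,M_n\}\subset\mathcal P^f_{\mathrm{Cl}}(X)$, $\Sigma(\mathcal M)\ne\emptyset$ and $d\in\Omega(\mathcal M)$. Let $K_1,K_2\in\Sigma_d(\mathcal M)$ with $K_1\subset K_2$. Then every $K\in\mathcal P^f_{\mathrm{Cl}}(X)$ with $K_1\subset K\subset K_2$ belongs to $\Sigma_d(\mathcal M)$.
   Context: For a metric space $X$, $p\in X$, $A\subset X$: $|p\,A|=\inf_{a\in A}|p\,a|$ ($=\infty$ if $A=\emptyset$); for $0\le r<\infty$, $B_r(A)=\{p:|p\,A|\le r\}$. For nonempty $A,B$, $d_H(A,B)=\max\{\sup_{a\in A}|a\,B|,\sup_{b\in B}|b\,A|\}\in[0,\infty]$. $\mathcal P_{\mathrm{Cl}}(X)$ is the set of nonempty closed subsets of $X$ with $d_H$. A finiteness class of $\mathcal P_{\mathrm{Cl}}(X)$ is an equivalence class of the relation $A\sim B\iff d_H(A,B)<\infty$; $\mathcal P^f_{\mathrm{Cl}}(X)$ denotes a fixed finiteness class. For finite $\mathcal M=\{M_1,\dots,M_n\}\subset\mathcal P^f_{\mathrm{Cl}}(X)$, set $S_{\mathcal M}(Y)=\sum_{i=1}^n d_H(Y,M_i)$ for $Y\in\mathcal P^f_{\mathrm{Cl}}(X)$; $\Sigma(\mathcal M)$ is the set of all minimizers of $S_{\mathcal M}$ over $\mathcal P^f_{\mathrm{Cl}}(X)$. For $K\in\Sigma(\mathcal M)$, $d(K)=(d_H(K,M_1),\dots,d_H(K,M_n))$;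 $\Omega(\mathcal M)=\{d(K):K\in\Sigma(\mathcal M)\}$; for $d=(d_1,\dots,d_n)\in\Omega(\mathcal M)$, $\Sigma_d(\mathcal M)=\{K\in\Sigma(\mathcal M):d(K)=d\}$, partially ordered by inclusion; and $K_d=\bigcap_{i=1}^n B_{d_i}(M_i)$. *)

theory Defs
  imports "HOL-Analysis.Analysis"
begin

text \<open>Distance from a point to a set, with value infinity for the empty set.\<close>
definition pdist :: "'a::metric_space \<Rightarrow> 'a set \<Rightarrow> ereal" where
  "pdist p A = (INF a\<in>A. ereal (dist p a))"

definition cnbhd :: "real \<Rightarrow> 'a::metric_space set \<Rightarrow> 'a set" where
  "cnbhd r A = {p. pdist p A \<le> ereal r}"

definition hdist :: "'a::metric_space set \<Rightarrow> 'a set \<Rightarrow> ereal" where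
  "hdist A B = max (SUP a\<in>A. pdist a B) (SUP b\<in>B. pdist b A)"

definition PCl :: "'a::metric_space set set" where
  "PCl = {A. closed A \<and> A \<noteq> {}}"

definition finiteness_class :: "'a::metric_space set set \<Rightarrow> bool" where
  "finiteness_class C \<longleftrightarrow> (\<exists>A\<in>PCl. C = {B\<in>PCl. hdist A B < \<infinity>})"

text \<open>The family M = (M_1,...,M_n) is given as a list.\<close>
definition SM :: "'a::metric_space set list \<Rightarrow> 'a set \<Rightarrow> ereal" where
  "SM Ms Y = sum_list (map (\<lambda>Mi. hdist Y Mi) Ms)"

definition Sigma_min :: "'a::metric_space set set \<Rightarrow> 'a set list \<Rightarrow> 'a set set" where
  "Sigma_min C Ms = {K\<in>C. \<forall>Y\<in>C. SM Ms K \<le> SM Ms Y}"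

definition dvec :: "'a::metric_space set list \<Rightarrow> 'a set \<Rightarrow> ereal list" where
  "dvec Ms K = map (\<lambda>Mi. hdist K Mi) Ms"

definition Omega :: "'a::metric_space set set \<Rightarrow> 'a set list \<Rightarrow> ereal list set" where
  "Omega C Ms = dvec Ms ` Sigma_min C Ms"

definition Sigma_d :: "'a::metric_space set set \<Rightarrow> 'a set list \<Rightarrow> ereal list \<Rightarrow> 'a set set" where
  "Sigma_d C Ms d = {K\<in>Sigma_min C Ms. dvec Ms K = d}"

end

theory Submission
  imports Defs
begin

text \<open>Between two sets with the same Hausdorff distances to every \<open>M\<^sub>i\<close>, an
intermediate set \<open>K\<close> is no farther from any \<open>M\<^sub>i\<close>: its points lie in the larger set,
and every point of \<open>M\<^sub>i\<close> is at least as close to \<open>K\<close> as to the smaller set.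
If the smaller set minimizes \<open>S\<^sub>\<M>\<close>, all these (finite) inequalities must be
equalities, so \<open>K\<close> is a minimizer with the same distance vector.\<close>

lemma pdist_nonneg: "0 \<le> pdist p A"
  unfolding pdist_def by (rule INF_greatest) simp

lemma pdist_triangle: "pdist p C \<le> ereal (dist p a) + pdist a C"
proof -
  have "pdist p C - ereal (dist p a) \<le> pdist a C"
    unfolding pdist_def[of a]
  proof (rule INF_greatest)
    fix c assume "c \<in> C"
    then have "pdist p C \<le> ereal (dist p c)" unfolding pdist_def by (rule INF_lower)
    also have "\<dots> \<le> ereal (dist a c) + ereal (dist p a)" using dist_triangle[of p c a] by simp
    finally show "pdist p C - ereal (dist p a) \<le> ereal (dist a c)"
      by (simp add: ereal_minus_le)
  qed
  then show ?thesis by (simp add: ereal_minus_le add.commute)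
qed

lemma pdist_le_pdist_add_SUP_pdist:
  assumes "A \<noteq> {}"
  shows "pdist p C \<le> pdist p A + (SUP a\<in>A. pdist a C)"
proof (cases "(SUP a\<in>A. pdist a C) = \<infinity>")
  case True
  then show ?thesis using pdist_nonneg[of p A] by simp
next
  case False
  let ?s = "SUP a\<in>A. pdist a C"
  obtain a where "a \<in> A" using assms by auto
  then have "pdist a C \<le> ?s" by (rule SUP_upper)
  then have s_finite: "\<bar>?s\<bar> \<noteq> \<infinity>" using pdist_nonneg[of a C] False by auto
  have "pdist p C - ?s \<le> pdist p A"
    unfolding pdist_def[of p A]
  proof (rule INF_greatest)
    fix a assume "a \<in> A"
    have "pdist p C \<le> ereal (dist p a) + pdist a C" by (rule pdist_triangle)
    also have "\<dots> \<le> ereal (dist p a) + ?s" using \<open>a \<in> A\<close> by (intro add_left_mono SUP_upper)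
    finally show "pdist p C - ?s \<le> ereal (dist p a)" using s_finite by (simp add: ereal_minus_le)
  qed
  then show ?thesis using s_finite by (simp add: ereal_minus_le)
qed

lemma hdist_commute: "hdist A B = hdist B A"
  unfolding hdist_def by (simp add: max.commute)

lemma hdist_nonneg:
  assumes "A \<noteq> {}"
  shows "0 \<le> hdist A B"
proof -
  obtain a where "a \<in> A" using assms by auto
  have "0 \<le> pdist a B" by (rule pdist_nonneg)
  also have "\<dots> \<le> (SUP a\<in>A. pdist a B)" using \<open>a \<in> A\<close> by (rule SUP_upper)
  finally show ?thesis unfolding hdist_def by (rule max.coboundedI1)
qed

lemma SUP_pdist_le_hdist_add:
  assumes "A \<noteq> {}"
  shows "(SUP b\<in>B. pdist b C) \<le> hdist B A + hdist A C"
proof (rule SUP_least)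
  fix b assume "b \<in> B"
  have "pdist b C \<le> pdist b A + (SUP a\<in>A. pdist a C)"
    using assms by (rule pdist_le_pdist_add_SUP_pdist)
  also have "\<dots> \<le> hdist B A + hdist A C"
    unfolding hdist_def using \<open>b \<in> B\<close> by (intro add_mono max.coboundedI1 SUP_upper) simp_all
  finally show "pdist b C \<le> hdist B A + hdist A C" .
qed

lemma hdist_triangle:
  assumes "A \<noteq> {}"
  shows "hdist B C \<le> hdist B A + hdist A C"
proof -
  have "(SUP c\<in>C. pdist c B) \<le> hdist C A + hdist A B"
    using assms by (rule SUP_pdist_le_hdist_add)
  moreover have "(SUP b\<in>B. pdist b C) \<le> hdist B A + hdist A C"
    using assms by (rule SUP_pdist_le_hdist_add)
  ultimately show ?thesis unfolding hdist_def[of B C] by (simp add: hdist_commute add.commute)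
qed

lemma hdist_between_le_max:
  assumes "A \<subseteq> K" and "K \<subseteq> B"
  shows "hdist K M \<le> max (hdist A M) (hdist B M)"
proof -
  have "(SUP k\<in>K. pdist k M) \<le> (SUP b\<in>B. pdist b M)"
    using \<open>K \<subseteq> B\<close> by (rule SUP_subset_mono) simp
  moreover have "(SUP m\<in>M. pdist m K) \<le> (SUP m\<in>M. pdist m A)"
    unfolding pdist_def using \<open>A \<subseteq> K\<close> by (intro SUP_mono' INF_superset_mono) simp_all
  ultimately show ?thesis unfolding hdist_def by (auto simp: le_max_iff_disj)
qed

lemma finiteness_class_nonempty:
  assumes "finiteness_class C" and "X \<in> C"
  shows "X \<noteq> {}"
  using assms unfolding finiteness_class_def PCl_def by auto

lemma finiteness_class_hdist_finite:
  assumes "finiteness_class C" and "X \<in> C" and "Y \<in> C"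
  shows "\<bar>hdist X Y\<bar> \<noteq> \<infinity>"
proof -
  obtain A where "A \<in> PCl" and C_eq: "C = {B\<in>PCl. hdist A B < \<infinity>}"
    using assms(1) unfolding finiteness_class_def by blast
  then have "A \<noteq> {}" unfolding PCl_def by simp
  then have "hdist X Y \<le> hdist X A + hdist A Y" by (rule hdist_triangle)
  also have "\<dots> < \<infinity>"
    using assms(2,3) C_eq hdist_commute[of X A] by auto
  finally have "hdist X Y < \<infinity>" .
  moreover have "0 \<le> hdist X Y"
    using finiteness_class_nonempty[OF assms(1,2)] by (rule hdist_nonneg)
  ultimately show ?thesis by auto
qed

lemma sum_list_mono_eq_imp_eq:
  fixes f g :: "'b \<Rightarrow> 'c::ordered_ab_semigroup_monoid_add_imp_le"
  assumes "\<forall>x\<in>set xs. f x \<le> g x"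
    and "sum_list (map g xs) \<le> sum_list (map f xs)"
  shows "\<forall>x\<in>set xs. f x = g x"
  using assms
proof (induction xs)
  case Nil
  then show ?case by simp
next
  case (Cons a xs)
  have tail_le: "sum_list (map f xs) \<le> sum_list (map g xs)"
    using Cons.prems(1) by (intro sum_list_mono) simp
  have "g a + sum_list (map g xs) \<le> f a + sum_list (map f xs)"
    using Cons.prems(2) by simp
  also have "\<dots> \<le> f a + sum_list (map g xs)"
    using tail_le by (rule add_left_mono)
  finally have "g a \<le> f a" by simp
  then have "f a = g a" using Cons.prems(1) by (simp add: order_antisym)
  then have "sum_list (map g xs) \<le> sum_list (map f xs)" using Cons.prems(2) by simp
  with Cons show ?case using \<open>f a = g a\<close> by simp
qed

lemma sum_list_map_ereal_real:
  fixes f :: "'b \<Rightarrow> ereal"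
  assumes "\<forall>x\<in>set xs. \<bar>f x\<bar> \<noteq> \<infinity>"
  shows "sum_list (map f xs) = ereal (sum_list (map (\<lambda>x. real_of_ereal (f x)) xs))"
  using assms by (induction xs) (auto simp: ereal_real)

lemma ereal_sum_list_mono_eq_imp_eq:
  fixes f g :: "'b \<Rightarrow> ereal"
  assumes le: "\<forall>x\<in>set xs. f x \<le> g x"
    and f_finite: "\<forall>x\<in>set xs. \<bar>f x\<bar> \<noteq> \<infinity>" and g_finite: "\<forall>x\<in>set xs. \<bar>g x\<bar> \<noteq> \<infinity>"
    and sum_le: "sum_list (map g xs) \<le> sum_list (map f xs)"
  shows "\<forall>x\<in>set xs. f x = g x"
proof -
  let ?rf = "\<lambda>x. real_of_ereal (f x)" and ?rg = "\<lambda>x. real_of_ereal (g x)"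
  have "\<forall>x\<in>set xs. ?rf x \<le> ?rg x"
  proof
    fix x assume "x \<in> set xs"
    then have "ereal (?rf x) \<le> ereal (?rg x)" using le f_finite g_finite by (simp add: ereal_real)
    then show "?rf x \<le> ?rg x" by simp
  qed
  moreover have "sum_list (map ?rg xs) \<le> sum_list (map ?rf xs)"
    using sum_le sum_list_map_ereal_real[OF f_finite] sum_list_map_ereal_real[OF g_finite]
    by simp
  ultimately have "\<forall>x\<in>set xs. ?rf x = ?rg x" by (rule sum_list_mono_eq_imp_eq)
  then show ?thesis using f_finite g_finite by (metis ereal_real)
qed

lemma Sigma_d_if_hdist_le_minimizer:
  assumes C: "finiteness_class C" and "set Ms \<subseteq> C"
    and K'_min: "K' \<in> Sigma_min C Ms" and "K \<in> C"
    and le: "\<forall>M\<in>set Ms. hdist K M \<le> hdist K' M"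
  shows "K \<in> Sigma_d C Ms (dvec Ms K')"
proof -
  have "K' \<in> C" and SM_le: "SM Ms K' \<le> SM Ms K"
    using K'_min \<open>K \<in> C\<close> unfolding Sigma_min_def by auto
  have hdist_finite: "\<forall>M\<in>set Ms. \<bar>hdist X M\<bar> \<noteq> \<infinity>" if "X \<in> C" for X
  proof
    fix M assume "M \<in> set Ms"
    with \<open>set Ms \<subseteq> C\<close> have "M \<in> C" by (rule subsetD)
    with C \<open>X \<in> C\<close> show "\<bar>hdist X M\<bar> \<noteq> \<infinity>" by (rule finiteness_class_hdist_finite)
  qed
  have "\<forall>M\<in>set Ms. hdist K M = hdist K' M"
    using le hdist_finite[OF \<open>K \<in> C\<close>] hdist_finite[OF \<open>K' \<in> C\<close>]
  proof (rule ereal_sum_list_mono_eq_imp_eq)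
    show "sum_list (map (hdist K') Ms) \<le> sum_list (map (hdist K) Ms)"
      using SM_le unfolding SM_def by simp
  qed
  then have hdist_eq: "map (hdist K) Ms = map (hdist K') Ms" by simp
  have "SM Ms K = SM Ms K'" and "dvec Ms K = dvec Ms K'"
    unfolding SM_def dvec_def by (simp_all only: hdist_eq)
  with K'_min \<open>K \<in> C\<close> show ?thesis unfolding Sigma_d_def Sigma_min_def by simp
qed

theorem mainTheorem10:
  fixes C :: "'a::metric_space set set" and Ms :: "'a set list" and d :: "ereal list"
    and K1 K2 :: "'a set"
  assumes "finiteness_class C"
    and "set Ms \<subseteq> C"
    and "Sigma_min C Ms \<noteq> {}"
    and "d \<in> Omega C Ms"
    and "K1 \<in> Sigma_d C Ms d" and "K2 \<in> Sigma_d C Ms d"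
    and "K1 \<subseteq> K2"
  shows "\<forall>K\<in>C. K1 \<subseteq> K \<and> K \<subseteq> K2 \<longrightarrow> K \<in> Sigma_d C Ms d"
proof (intro ballI impI)
  fix K assume "K \<in> C" and between: "K1 \<subseteq> K \<and> K \<subseteq> K2"
  have K1_min: "K1 \<in> Sigma_min C Ms" and d_eq: "d = dvec Ms K1" "d = dvec Ms K2"
    using assms(5,6) unfolding Sigma_d_def by auto
  have "\<forall>M\<in>set Ms. hdist K M \<le> hdist K1 M"
  proof
    fix M assume "M \<in> set Ms"
    then have "hdist K2 M = hdist K1 M" using d_eq unfolding dvec_def by simp
    then show "hdist K M \<le> hdist K1 M"
      using hdist_between_le_max[of K1 K K2 M] between by simp
  qed
  then show "K \<in> Sigma_d C Ms d"
    using Sigma_d_if_hdist_le_minimizer[OF assms(1,2) K1_min \<open>K \<in> C\<close>] d_eq(1) by simp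
qed

end
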